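(* Let $n$ be a natural number, $\mathrm{ADDR}$ an address, and $\mathit{EXT}$ the Findel contract description $\mathtt{And}(\mathtt{Give}(\mathtt{Scale}(n,\mathtt{One}(\mathrm{EUR}))),\ \mathtt{ScaleObs}(\mathrm{ADDR},\mathtt{Scale}(n,\mathtt{One}(\mathrm{USD}))))$, issued by Alice with Bob as (proposed) owner, in the Findel marketplace semantics described in the context, with a trustworthy gateway. If $\mathit{EXT}$ is executed (i.e., Bob successfully joins it), then Alice receives $n$ euros (from Bob), i.e., a transfer of $n$ EUR from Bob to Alice is recorded in the ledger.
   Context: Findel contract descriptions are trees built from primitives: $\mathtt{Zero}$ (do nothing); $\mathtt{One}(c)$ (transfer 1 unit of currency $c$ from issuer to owner); $\mathtt{Scale}(k,p)$ (multiply all payments of $p$ by the natural number $k$); $\mathtt{ScaleObs}(a,p)$ (multiply all payments of $p$ by a factor obtained from address $a$ via an external gateway, a partial map from addresses to values; execution fails if the gateway provides no value); $\mathtt{Give}(p)$ (swap issuer and owner in $p$); $\mathtt{And}(p_1,p_2)$ (execute $p_1$ then $p_2$); $\mathtt{Or}(p_1,p_2)$ (owner may execute exactly one of $p_1,p_2$); $\mathtt{If}(a,p_1,p_2)$ (execute $p_1$ if the boolean obtained from address $a$ is true, else $p_2$); $\mathtt{Timebound}(t_0,t_1,p)$ (execute $p$ if the current time lies in $[t_0,t_1]$). A contract has an id, a description, an issuer, an owner, a proposed owner and a scale. The marketplace state consists of the issued contracts, available descriptions, balances, a global time $t$, the gateway, a fresh id counter, a ledger (ordered list of performed transfers), and a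 list of events. Transitions: Issue (add a contract whose owner field is the issuer and with a proposed owner; event IssuedFor); Join (if the joining party is the proposed owner, the root is not $\mathtt{Or}$, the current time is within the description's validity interval, and recursive execution succeeds, then balances and ledger are updated, contracts generated by execution are added, and an Executed event is emitted; for an $\mathtt{Or}$ root the owner executes one chosen branch); Fail (if execution fails the contract is deleted with a Deleted event); Tick ($t \mapsto t+1$). Recursive execution with scale $s$: $\mathtt{One}(c)$ transfers $s$ units of $c$ from the current issuer to the current owner and records it in the ledger; $\mathtt{Or}$ nodes and $\mathtt{Timebound}$ nodes with $t_0 > t$ are not executed but instead issue a new contract with the same parties and that node as root, which the owner may later join; $\mathtt{Timebound}$ with $t > t_1$ fails. Balances may become negative (debt is allowed). *)

theory Defs
  imports Main
begin

type_synonym party = nat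
type_synonym addr = nat
type_synonym cid = nat
type_synonym time = nat

datatype currency = EUR | USD | OtherCur nat

datatype desc =
    Zero
  | One currency
  | Scale nat desc
  | ScaleObs addr desc
  | Give desc
  | And desc desc
  | Or desc desc
  | If addr desc desc
  | Timebound time time desc

datatype gvalue = GNum int | GBool bool

type_synonym gateway = "addr \<Rightarrow> gvalue option"

text \<open>A description together with its validity interval (None = no upper bound).\<close>
record fdesc =
  root :: desc
  valid_from :: time
  valid_until :: "time option"

record contract =
  cid :: cid
  cdesc :: fdesc
  cissuer :: party
  cowner :: party
  cproposed :: party
  cscale :: int

text \<open>A ledger entry: (from, to, currency, amount).\<close>
type_synonym transfer = "party \<times> party \<times> currency \<times> int"

text \<open>Contracts generated during execution: (root node, issuer, owner, scale).\<close>
type_synonym gen = "desc \<times> party \<times> party \<times> int"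

datatype event = IssuedFor party cid | Executed cid | Deleted cid

record state =
  contracts :: "cid \<Rightarrow> contract option"
  descs :: "fdesc set"
  balance :: "party \<Rightarrow> currency \<Rightarrow> int"
  now :: time
  gw :: gateway
  fresh :: cid
  ledger :: "transfer list"
  events :: "event list"

fun exec :: "time \<Rightarrow> gateway \<Rightarrow> int \<Rightarrow> party \<Rightarrow> party \<Rightarrow> desc
             \<Rightarrow> (transfer list \<times> gen list) option" where
  "exec t g s iss own Zero = Some ([], [])"
| "exec t g s iss own (One c) = Some ([(iss, own, c, s)], [])"
| "exec t g s iss own (Scale k p) = exec t g (s * int k) iss own p"
| "exec t g s iss own (ScaleObs a p) =
     (case g a of Some (GNum v) \<Rightarrow> exec t g (s * v) iss own p | _ \<Rightarrow> None)"
| "exec t g s iss own (Give p) = exec t g s own iss p"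
| "exec t g s iss own (And p1 p2) =
     (case exec t g s iss own p1 of
        None \<Rightarrow> None
      | Some (tr1, gs1) \<Rightarrow>
          (case exec t g s iss own p2 of
             None \<Rightarrow> None
           | Some (tr2, gs2) \<Rightarrow> Some (tr1 @ tr2, gs1 @ gs2)))"
| "exec t g s iss own (Or p1 p2) = Some ([], [(Or p1 p2, iss, own, s)])"
| "exec t g s iss own (If a p1 p2) =
     (case g a of Some (GBool b) \<Rightarrow> (if b then exec t g s iss own p1 else exec t g s iss own p2)
      | _ \<Rightarrow> None)"
| "exec t g s iss own (Timebound t0 t1 p) =
     (if t < t0 then Some ([], [(Timebound t0 t1 p, iss, own, s)])
      else if t1 < t then None
      else exec t g s iss own p)"

fun apply_transfers :: "(party \<Rightarrow> currency \<Rightarrow> int) \<Rightarrow> transfer list \<Rightarrow> (party \<Rightarrow> currency \<Rightarrow> int)" where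
  "apply_transfers bal [] = bal"
| "apply_transfers bal ((f, to, c, a) # trs) =
     apply_transfers ((bal(f := (bal f)(c := bal f c - a)))(to := ((bal(f := (bal f)(c := bal f c - a))) to)(c := (bal(f := (bal f)(c := bal f c - a))) to c + a))) trs"

fun add_gens :: "time \<Rightarrow> state \<Rightarrow> gen list \<Rightarrow> state" where
  "add_gens t st [] = st"
| "add_gens t st ((d, iss, own, sc) # gs) =
     add_gens t (st\<lparr> contracts := (contracts st)(fresh st \<mapsto>
                     \<lparr> cid = fresh st, cdesc = \<lparr> root = d, valid_from = 0, valid_until = None \<rparr>,
                       cissuer = iss, cowner = iss, cproposed = own, cscale = sc \<rparr>),
                   fresh := Suc (fresh st),
                   events := events st @ [IssuedFor own (fresh st)] \<rparr>) gs"

definition within_validity :: "time \<Rightarrow> fdesc \<Rightarrow> bool" where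
  "within_validity t d \<longleftrightarrow> valid_from d \<le> t \<and> (case valid_until d of None \<Rightarrow> True | Some u \<Rightarrow> t \<le> u)"

definition is_or :: "desc \<Rightarrow> bool" where
  "is_or d \<longleftrightarrow> (\<exists>p1 p2. d = Or p1 p2)"

definition do_execute :: "state \<Rightarrow> cid \<Rightarrow> transfer list \<Rightarrow> gen list \<Rightarrow> state" where
  "do_execute st i trs gs =
     add_gens (now st)
       (st\<lparr> contracts := (contracts st)(i := None),
            balance := apply_transfers (balance st) trs,
            ledger := ledger st @ trs,
            events := events st @ [Executed i] \<rparr>) gs"

datatype label =
    LIssue party party fdesc      (* issuer, proposed owner, description *)
  | LJoin party cid
  | LJoinOr party cid bool        (* joining party, contract id, True = first branch *)
  | LFail party cid
  | LTick

inductive step :: "state \<Rightarrow> label \<Rightarrow> state \<Rightarrow> bool" where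
  issue: "step st (LIssue iss po d)
            (st\<lparr> contracts := (contracts st)(fresh st \<mapsto>
                    \<lparr> cid = fresh st, cdesc = d, cissuer = iss, cowner = iss,
                      cproposed = po, cscale = 1 \<rparr>),
                 descs := insert d (descs st),
                 fresh := Suc (fresh st),
                 events := events st @ [IssuedFor po (fresh st)] \<rparr>)"
| join: "\<lbrakk> contracts st i = Some c; cproposed c = p; \<not> is_or (root (cdesc c));
           within_validity (now st) (cdesc c);
           exec (now st) (gw st) (cscale c) (cissuer c) p (root (cdesc c)) = Some (trs, gs) \<rbrakk>
         \<Longrightarrow> step st (LJoin p i) (do_execute st i trs gs)"
| join_or: "\<lbrakk> contracts st i = Some c; cproposed c = p; root (cdesc c) = Or p1 p2;
           within_validity (now st) (cdesc c);
           exec (now st) (gw st) (cscale c) (cissuer c) p (if b then p1 else p2) = Some (trs, gs) \<rbrakk>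
         \<Longrightarrow> step st (LJoinOr p i b) (do_execute st i trs gs)"
| fail: "\<lbrakk> contracts st i = Some c; cproposed c = p; within_validity (now st) (cdesc c);
           (\<not> is_or (root (cdesc c)) \<and> exec (now st) (gw st) (cscale c) (cissuer c) p (root (cdesc c)) = None)
           \<or> (\<exists>p1 p2 b. root (cdesc c) = Or p1 p2 \<and>
                 exec (now st) (gw st) (cscale c) (cissuer c) p (if b then p1 else p2) = None) \<rbrakk>
         \<Longrightarrow> step st (LFail p i)
               (st\<lparr> contracts := (contracts st)(i := None), events := events st @ [Deleted i] \<rparr>)"
| tick: "step st LTick (st\<lparr> now := Suc (now st) \<rparr>)"

definition EXT :: "nat \<Rightarrow> addr \<Rightarrow> desc" where
  "EXT n ADDR = And (Give (Scale n (One EUR))) (ScaleObs ADDR (Scale n (One USD)))"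

end

theory Submission
  imports Defs
begin

text \<open>A join step only happens when the whole execution of the contract succeeds, and the
  transfers of that execution are appended to the ledger. The execution of an And node
  contains the transfers of its first branch, and the first branch of EXT is the euro payment
  from the owner to the issuer, so it is recorded whatever the gateway reports for the
  observable second branch.\<close>

lemma ledger_add_gens [simp]: "ledger (add_gens t st gs) = ledger st"
  by (induction t st gs rule: add_gens.induct) auto

lemma ledger_do_execute [simp]: "ledger (do_execute st i trs gs) = ledger st @ trs"
  by (simp add: do_execute_def)

lemma step_LJoinE:
  assumes "step s (LJoin p i) s'" and "contracts s i = Some c"
  obtains trs gs where
    "exec (now s) (gw s) (cscale c) (cissuer c) p (root (cdesc c)) = Some (trs, gs)"
    and "s' = do_execute s i trs gs"
  using assms by cases auto

lemma exec_And_first_transfers: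
  assumes "exec t g k iss own (And p q) = Some (trs, gs)"
    and "exec t g k iss own p = Some (trs1, gs1)"
  shows "set trs1 \<subseteq> set trs"
  using assms by (auto split: option.splits)

lemma exec_Give_Scale_One:
  "exec t g k iss own (Give (Scale m (One cur))) = Some ([(own, iss, cur, k * int m)], [])"
  by simp

lemma join_pays_first_give:
  assumes "contracts s i = Some c"
    and "root (cdesc c) = And (Give (Scale m (One cur))) q"
    and "step s (LJoin p i) s'"
  shows "(p, cissuer c, cur, cscale c * int m) \<in> set (ledger s')"
proof -
  obtain trs gs where
    exec: "exec (now s) (gw s) (cscale c) (cissuer c) p (root (cdesc c)) = Some (trs, gs)"
    and s': "s' = do_execute s i trs gs"
    using step_LJoinE[OF assms(3,1)] .
  have "(p, cissuer c, cur, cscale c * int m) \<in> set trs"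
    using exec_And_first_transfers[OF exec[unfolded assms(2)] exec_Give_Scale_One] by simp
  then show ?thesis
    using s' by simp
qed

theorem lemma3:
  fixes n :: nat and ADDR :: addr and Alice Bob :: party
    and s s' :: state and i :: cid and c :: contract
  assumes "contracts s i = Some c"
    and "root (cdesc c) = EXT n ADDR"
    and "cissuer c = Alice"
    and "cproposed c = Bob"
    and "cscale c = 1"
    and "step s (LJoin Bob i) s'"
  shows "(Bob, Alice, EUR, int n) \<in> set (ledger s')"
  using join_pays_first_give[OF assms(1) _ assms(6)] assms(2,3,5)
  by (simp add: EXT_def)

end
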